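(* Let $\mu$ be as in the context and let $(\Phi,\Phi^\star)$ be a pair of finite Young functions with $\Phi^\star$ the Legendre transform of $\Phi$, such that $\lim_{x\to\infty}\Phi^\star(x)/x^2=\infty$ and such that $x\mapsto\Phi^\star(\sqrt{x})$ (for $x\ge0$, extended evenly) is also a Young function. Suppose that for some $r_0\in[0,\infty)$ the partial Orlicz super Poincaré inequality holds: there is a function $\beta:(r_0,\infty)\to[0,\infty)$ such that for every $r>r_0$ and every admissible $f$, \[\int f^2\,d\mu\le r\int|\nabla f|^2\,d\mu+\beta(r)\,\|f\|_\Phi^2.\] Then there is a function $\tilde\beta:(8r_0,\infty)\to[0,\infty)$ (depending only on $\beta$, $\Phi$ and $\mu$) such that for every $r>8r_0$ and every admissible $f$, \[\int f^2\,d\mu\le r\int|\nabla f|^2\,d\mu+\tilde\beta(r)\Big(\int|f|\,d\mu\Big)^2.\]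
   Context: Setting: $V:\mathbb R^n\to\mathbb R$ smooth with $\int e^{-V}dx<\infty$, $\mu(dx)=Z^{-1}e^{-V(x)}dx$ a probability measure on $\mathbb R^n$; "admissible $f$" means $f\in L^2(\mu)$ locally Lipschitz with $\int|\nabla f|^2d\mu<\infty$. A Young function is an even convex function $\Phi:\mathbb R\to[0,\infty)$ with $\Phi(0)=0$ and $\lim_{x\to\infty}\Phi(x)=\infty$. The Legendre transform is $\Phi^\star(y)=\sup_x(xy-\Phi(x))$. The Luxemburg norm is $\|f\|_\Phi=\inf\{\lambda>0:\int\Phi(|f|/\lambda)\,d\mu\le1\}$. *)

theory Defs
  imports "HOL-Analysis.Analysis"
begin

coinductive smooth_fun :: "(real^'n \<Rightarrow> real) \<Rightarrow> bool" where
  "(\<forall>x. g differentiable (at x)) \<Longrightarrow>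
   (\<forall>i. smooth_fun (\<lambda>x. frechet_derivative g (at x) (axis i 1))) \<Longrightarrow> smooth_fun g"

definition gibbs :: "(real^'n \<Rightarrow> real) \<Rightarrow> (real^'n) measure" where
  "gibbs V = density lborel
     (\<lambda>x. ennreal (exp (- V x) / (\<integral>y. exp (- V y) \<partial>lborel)))"

text \<open>Gradient (where f is differentiable; locally Lipschitz f are differentiable a.e.).\<close>
definition grad :: "(real^'n \<Rightarrow> real) \<Rightarrow> real^'n \<Rightarrow> real^'n" where
  "grad f x = (if f differentiable (at x)
               then (\<chi> i. frechet_derivative f (at x) (axis i 1)) else 0)"

definition locally_lipschitz :: "(real^'n \<Rightarrow> real) \<Rightarrow> bool" where
  "locally_lipschitz f \<longleftrightarrow> (\<forall>x. \<exists>e>0. \<exists>C. lipschitz_on C (ball x e) f)"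

definition admissible :: "(real^'n) measure \<Rightarrow> (real^'n \<Rightarrow> real) \<Rightarrow> bool" where
  "admissible M f \<longleftrightarrow> f \<in> borel_measurable M \<and> integrable M (\<lambda>x. (f x)\<^sup>2)
     \<and> locally_lipschitz f \<and> integrable M (\<lambda>x. (norm (grad f x))\<^sup>2)"

definition young :: "(real \<Rightarrow> real) \<Rightarrow> bool" where
  "young \<Phi> \<longleftrightarrow> (\<forall>x. \<Phi> (- x) = \<Phi> x) \<and> convex_on UNIV \<Phi> \<and> (\<forall>x. 0 \<le> \<Phi> x)
     \<and> \<Phi> 0 = 0 \<and> filterlim \<Phi> at_top at_top"

definition legendre_of :: "(real \<Rightarrow> real) \<Rightarrow> (real \<Rightarrow> real) \<Rightarrow> bool" where
  "legendre_of \<Phi> \<Phi>' \<longleftrightarrow> (\<forall>y. bdd_above (range (\<lambda>x. x * y - \<Phi> x))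
     \<and> \<Phi>' y = (SUP x. x * y - \<Phi> x))"

text \<open>The set of admissible lambdas in the Luxemburg norm; it is nonempty iff the norm is finite.\<close>
definition lux_set :: "(real \<Rightarrow> real) \<Rightarrow> 'a measure \<Rightarrow> ('a \<Rightarrow> real) \<Rightarrow> real set" where
  "lux_set \<Phi> M f = {l. l > 0 \<and> (\<integral>\<^sup>+ x. ennreal (\<Phi> (\<bar>f x\<bar> / l)) \<partial>M) \<le> 1}"

definition lux_norm :: "(real \<Rightarrow> real) \<Rightarrow> 'a measure \<Rightarrow> ('a \<Rightarrow> real) \<Rightarrow> real" where
  "lux_norm \<Phi> M f = Inf (lux_set \<Phi> M f)"

end

theory Submission
  imports Defs
begin

(* Because the Legendre transform \<Phi>s grows faster than x^2, the Young
   function \<Phi> grows at most quadratically with an arbitrarily small quadratic constant: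
   for every \<eta> > 0 there is a \<ge> 0 with \<Phi> x \<le> a |x| + \<eta> x^2.  (Fenchel-Young equality
   at a subgradient y of \<Phi> at x gives \<Phi> x \<le> x y - \<Phi>s y; for large |y| the right side is
   at most x^2/(4M) when \<Phi>s y \<ge> M y^2, for small |y| it is at most Y |x|.)
   On the Gibbs probability measure this bounds the Luxemburg norm:
   \<parallel>f\<parallel>_\<Phi>^2 \<le> \<epsilon> \<integral>f^2 + 4 a^2 (\<integral>|f|)^2.
   Inserting this into the super Poincare inequality at scale s = r/2 with \<epsilon> chosen so
   that \<beta>(s) \<epsilon> \<le> 1/2, the term \<beta>(s) \<epsilon> \<integral>f^2 is absorbed into the left-hand side, giving
   the inequality at scale r = 2s (which is even better than the claimed range r > 8 r0). *)

(* Fenchel-Young inequality with equality: at a subgradient y of the convex function \<Phi>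
   at x, the Legendre transform satisfies \<Phi> x + \<Phi>s y \<le> x y. *)
lemma legendre_attained:
  fixes \<Phi> \<Phi>s :: "real \<Rightarrow> real"
  assumes cvx: "convex_on UNIV \<Phi>" and leg: "legendre_of \<Phi> \<Phi>s"
  shows "\<exists>y. \<Phi> x + \<Phi>s y \<le> x * y"
proof -
  define y where "y = Inf ((\<lambda>t. (\<Phi> x - \<Phi> t) / (x - t)) ` ({x<..} \<inter> UNIV))"
  have subgradient: "\<Phi> x + y * (z - x) \<le> \<Phi> z" for z
    unfolding y_def by (rule convex_le_Inf_differential[OF cvx]) auto
  have "\<Phi>s y = (SUP z. z * y - \<Phi> z)"
    using leg by (simp add: legendre_of_def)
  also have "\<dots> \<le> x * y - \<Phi> x"
    by (rule cSUP_least) (use subgradient in \<open>auto simp: algebra_simps\<close>)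
  finally show ?thesis by (intro exI[of _ y]) simp
qed

lemma superquadratic_lower_bound:
  fixes \<Phi>s :: "real \<Rightarrow> real"
  assumes even: "\<And>y. \<Phi>s (- y) = \<Phi>s y"
    and growth: "filterlim (\<lambda>x. \<Phi>s x / x\<^sup>2) at_top at_top"
  shows "\<exists>Y>0. \<forall>y. Y \<le> \<bar>y\<bar> \<longrightarrow> M * y\<^sup>2 \<le> \<Phi>s y"
proof -
  obtain Y0 where Y0: "\<And>y. y \<ge> Y0 \<Longrightarrow> M \<le> \<Phi>s y / y\<^sup>2"
    using growth by (auto simp: filterlim_at_top eventually_at_top_linorder)
  define Y where "Y = max Y0 1"
  have "M * y\<^sup>2 \<le> \<Phi>s y" if "Y \<le> \<bar>y\<bar>" for y
  proof -
    have "1 \<le> \<bar>y\<bar>" using that by (simp add: Y_def)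
    then have "0 < \<bar>y\<bar>\<^sup>2" by simp
    moreover have "M \<le> \<Phi>s \<bar>y\<bar> / \<bar>y\<bar>\<^sup>2" using Y0[of "\<bar>y\<bar>"] that by (simp add: Y_def)
    moreover have "\<Phi>s \<bar>y\<bar> = \<Phi>s y" using even by (cases "y \<ge> 0") auto
    ultimately show ?thesis by (simp add: le_divide_eq)
  qed
  then show ?thesis by (intro exI[of _ Y]) (auto simp: Y_def)
qed

lemma young_small_quadratic_bound:
  fixes \<Phi> \<Phi>s :: "real \<Rightarrow> real"
  assumes Y1: "young \<Phi>" and Y2: "young \<Phi>s" and leg: "legendre_of \<Phi> \<Phi>s"
    and growth: "filterlim (\<lambda>x. \<Phi>s x / x\<^sup>2) at_top at_top"
    and eta: "\<eta> > 0"
  shows "\<exists>a\<ge>0. \<forall>x. \<Phi> x \<le> a * \<bar>x\<bar> + \<eta> * x\<^sup>2"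
proof -
  define M where "M = 1 / (4 * \<eta>)"
  have Mpos: "M > 0" using eta by (simp add: M_def)
  obtain Y where Ypos: "Y > 0" and big: "\<And>y. Y \<le> \<bar>y\<bar> \<Longrightarrow> M * y\<^sup>2 \<le> \<Phi>s y"
    using superquadratic_lower_bound[of \<Phi>s M] Y2 growth by (auto simp: young_def)
  have "\<Phi> x \<le> Y * \<bar>x\<bar> + \<eta> * x\<^sup>2" for x
  proof -
    have "convex_on UNIV \<Phi>" using Y1 by (simp add: young_def)
    then obtain y where fy: "\<Phi> x + \<Phi>s y \<le> x * y"
      using legendre_attained[OF _ leg] by blast
    show ?thesis
    proof (cases "Y \<le> \<bar>y\<bar>")
      case True
      (* completing the square: x y - M y^2 \<le> x^2 / (4 M) = \<eta> x^2 *)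
      have "x * y - M * y\<^sup>2 = \<eta> * x\<^sup>2 - (2 * M * y - x)\<^sup>2 / (4 * M)"
        using Mpos eta by (simp add: M_def field_simps power2_eq_square)
      also have "\<dots> \<le> \<eta> * x\<^sup>2" using Mpos by simp
      finally have "x * y - M * y\<^sup>2 \<le> \<eta> * x\<^sup>2" .
      moreover have "0 \<le> Y * \<bar>x\<bar>" using Ypos by simp
      ultimately show ?thesis using fy big[OF True] by linarith
    next
      case False
      have "x * y \<le> \<bar>x\<bar> * \<bar>y\<bar>" by (metis abs_ge_self abs_mult)
      also have "\<dots> \<le> \<bar>x\<bar> * Y" using False by (intro mult_left_mono) auto
      finally have "x * y \<le> Y * \<bar>x\<bar>" by (simp add: mult.commute)
      moreover have "0 \<le> \<Phi>s y" using Y2 by (simp add: young_def)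
      moreover have "0 \<le> \<eta> * x\<^sup>2" using eta by simp
      ultimately show ?thesis using fy by linarith
    qed
  qed
  then show ?thesis using Ypos by (intro exI[of _ Y]) auto
qed

(* The normalised Gibbs density integrates to one, so the Gibbs measure is finite. *)
lemma gibbs_finite:
  fixes V :: "real^'n \<Rightarrow> real"
  assumes V_int: "integrable lborel (\<lambda>x. exp (- V x))"
  shows "finite_measure (gibbs V)"
proof -
  define Z where "Z = (\<integral>y. exp (- V y) \<partial>lborel)"
  have Zpos: "Z > 0"
  proof -
    have "Z \<noteq> 0"
    proof
      assume "Z = 0"
      then have "AE x in lborel. exp (- V x) = 0"
        using integral_nonneg_eq_0_iff_AE[OF V_int] unfolding Z_def by simp
      then have "ae_filter (lborel :: (real^'n) measure) = bot"
        using trivial_limit_def by fastforce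
      then show False by (simp add: ae_filter_eq_bot_iff)
    qed
    moreover have "Z \<ge> 0" unfolding Z_def by (simp add: integral_nonneg_AE)
    ultimately show ?thesis by simp
  qed
  have int: "integrable lborel (\<lambda>x. exp (- V x) / Z)" using V_int by simp
  have meas: "(\<lambda>x. ennreal (exp (- V x) / Z)) \<in> borel_measurable lborel"
    using borel_measurable_integrable[OF int] by measurable
  have "emeasure (gibbs V) (space (gibbs V)) = (\<integral>\<^sup>+ x. ennreal (exp (- V x) / Z) \<partial>lborel)"
    unfolding gibbs_def Z_def[symmetric] by (simp add: emeasure_density[OF meas])
  also have "\<dots> = ennreal (\<integral>x. exp (- V x) / Z \<partial>lborel)"
    by (rule nn_integral_eq_integral[OF int]) (use Zpos in simp)
  also have "(\<integral>x. exp (- V x) / Z \<partial>lborel) = 1"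
    using Zpos by (simp add: Z_def)
  finally show ?thesis by (intro finite_measureI) simp
qed

(* If \<Phi> x \<le> a|x| + (\<epsilon>/2) x^2, then l = sqrt(\<epsilon> \<integral>f^2 + 4 a^2 (\<integral>|f|)^2) is an admissible
   level in the Luxemburg norm: each of the two terms of \<integral>\<Phi>(|f|/l) is at most 1/2. *)
lemma lux_set_member:
  fixes M :: "'a measure" and f :: "'a \<Rightarrow> real"
  assumes fin: "finite_measure M" and fm: "f \<in> borel_measurable M"
    and sq: "integrable M (\<lambda>x. (f x)\<^sup>2)"
    and phi: "\<And>x. \<Phi> x \<le> a * \<bar>x\<bar> + (\<epsilon> / 2) * x\<^sup>2" and a: "a \<ge> 0" and eps: "\<epsilon> > 0"
    and Apos: "(\<integral>x. (f x)\<^sup>2 \<partial>M) > 0"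
  shows "sqrt (\<epsilon> * (\<integral>x. (f x)\<^sup>2 \<partial>M) + 4 * a\<^sup>2 * (\<integral>x. \<bar>f x\<bar> \<partial>M)\<^sup>2) \<in> lux_set \<Phi> M f"
proof -
  define A where "A = (\<integral>x. (f x)\<^sup>2 \<partial>M)"
  define B where "B = (\<integral>x. \<bar>f x\<bar> \<partial>M)"
  define l where "l = sqrt (\<epsilon> * A + 4 * a\<^sup>2 * B\<^sup>2)"
  have int1: "integrable M (\<lambda>x. \<bar>f x\<bar>)"
    using finite_measure.square_integrable_imp_integrable[OF fin fm] sq by simp
  have l2: "l\<^sup>2 = \<epsilon> * A + 4 * a\<^sup>2 * B\<^sup>2"
    unfolding l_def using eps Apos by (simp add: A_def)
  have lpos: "l > 0" unfolding l_def using eps Apos by (simp add: A_def add_pos_nonneg)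
  have "(2 * a * B)\<^sup>2 \<le> l\<^sup>2" using l2 eps Apos by (simp add: A_def power_mult_distrib)
  then have "2 * a * B \<le> l"
    using real_sqrt_le_mono[of "(2 * a * B)\<^sup>2" "l\<^sup>2"] lpos a by (simp add: B_def)
  then have linear_part: "a * B / l \<le> 1 / 2" using lpos by (simp add: divide_simps)
  have "\<epsilon> * A \<le> l\<^sup>2" using l2 by simp
  then have quadratic_part: "(\<epsilon> / 2) * A / l\<^sup>2 \<le> 1 / 2"
    using lpos by (simp add: divide_simps)
  have "(\<integral>\<^sup>+ x. ennreal (\<Phi> (\<bar>f x\<bar> / l)) \<partial>M)
      \<le> (\<integral>\<^sup>+ x. ennreal (a / l * \<bar>f x\<bar> + (\<epsilon> / 2 / l\<^sup>2) * (f x)\<^sup>2) \<partial>M)"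
  proof (rule nn_integral_mono, rule ennreal_leI)
    fix x
    have "\<Phi> (\<bar>f x\<bar> / l) \<le> a * \<bar>\<bar>f x\<bar> / l\<bar> + (\<epsilon> / 2) * (\<bar>f x\<bar> / l)\<^sup>2" by (rule phi)
    also have "\<dots> = a / l * \<bar>f x\<bar> + (\<epsilon> / 2 / l\<^sup>2) * (f x)\<^sup>2"
      using lpos by (simp add: power_divide)
    finally show "\<Phi> (\<bar>f x\<bar> / l) \<le> a / l * \<bar>f x\<bar> + (\<epsilon> / 2 / l\<^sup>2) * (f x)\<^sup>2" .
  qed
  also have "\<dots> = ennreal (\<integral>x. a / l * \<bar>f x\<bar> + (\<epsilon> / 2 / l\<^sup>2) * (f x)\<^sup>2 \<partial>M)"
    by (rule nn_integral_eq_integral) (use int1 sq lpos a eps in auto)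
  also have "(\<integral>x. a / l * \<bar>f x\<bar> + (\<epsilon> / 2 / l\<^sup>2) * (f x)\<^sup>2 \<partial>M) = a * B / l + (\<epsilon> / 2) * A / l\<^sup>2"
    using int1 sq by (simp add: A_def B_def)
  also have "ennreal (a * B / l + (\<epsilon> / 2) * A / l\<^sup>2) \<le> ennreal 1"
    using linear_part quadratic_part by (intro ennreal_leI) linarith
  finally show ?thesis using lpos unfolding lux_set_def l_def A_def B_def by simp
qed

lemma lux_norm_bounds:
  assumes "l \<in> lux_set \<Phi> M f"
  shows "0 \<le> lux_norm \<Phi> M f" and "lux_norm \<Phi> M f \<le> l"
proof -
  have "bdd_below (lux_set \<Phi> M f)"
    by (rule bdd_belowI[of _ 0]) (auto simp: lux_set_def)
  then show "lux_norm \<Phi> M f \<le> l" unfolding lux_norm_def by (rule cInf_lower[OF assms])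
  show "0 \<le> lux_norm \<Phi> M f" unfolding lux_norm_def
    using assms by (intro cInf_greatest) (auto simp: lux_set_def)
qed

(* Absorption at one scale s: a super Poincare inequality with constant b in the
   Luxemburg norm yields one at scale 2 s with the L^1 norm, by choosing
   \<epsilon> = 1/(2(b+1)) so that the \<epsilon>-part of the Luxemburg bound is absorbed. *)
lemma super_poincare_L1_at_scale:
  fixes M :: "(real^'n) measure" and \<Phi> :: "real \<Rightarrow> real"
  assumes fin: "finite_measure M" and s: "0 \<le> s" and b: "0 \<le> b"
    and quad: "\<And>\<eta>. \<eta> > 0 \<Longrightarrow> \<exists>a\<ge>0. \<forall>x. \<Phi> x \<le> a * \<bar>x\<bar> + \<eta> * x\<^sup>2"
    and SP: "\<And>f. admissible M f \<Longrightarrow> lux_set \<Phi> M f \<noteq> {} \<Longrightarrow>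
       (\<integral>x. (f x)\<^sup>2 \<partial>M) \<le> s * (\<integral>x. (norm (grad f x))\<^sup>2 \<partial>M) + b * (lux_norm \<Phi> M f)\<^sup>2"
  shows "\<exists>c\<ge>0. \<forall>f. admissible M f \<longrightarrow>
       (\<integral>x. (f x)\<^sup>2 \<partial>M) \<le> 2 * s * (\<integral>x. (norm (grad f x))\<^sup>2 \<partial>M) + c * (\<integral>x. \<bar>f x\<bar> \<partial>M)\<^sup>2"
proof -
  define \<epsilon> where "\<epsilon> = 1 / (2 * (b + 1))"
  have eps: "\<epsilon> > 0" and b_eps: "b * \<epsilon> \<le> 1 / 2"
    using b by (simp_all add: \<epsilon>_def divide_simps)
  obtain a where a: "a \<ge> 0" "\<And>x. \<Phi> x \<le> a * \<bar>x\<bar> + (\<epsilon> / 2) * x\<^sup>2"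
    using quad[of "\<epsilon> / 2"] eps by auto
  have "(\<integral>x. (f x)\<^sup>2 \<partial>M) \<le> 2 * s * (\<integral>x. (norm (grad f x))\<^sup>2 \<partial>M) + 8 * b * a\<^sup>2 * (\<integral>x. \<bar>f x\<bar> \<partial>M)\<^sup>2"
    if adm: "admissible M f" for f
  proof -
    define A where "A = (\<integral>x. (f x)\<^sup>2 \<partial>M)"
    define B where "B = (\<integral>x. \<bar>f x\<bar> \<partial>M)"
    define G where "G = (\<integral>x. (norm (grad f x))\<^sup>2 \<partial>M)"
    have "G \<ge> 0" "A \<ge> 0" unfolding G_def A_def by simp_all
    show ?thesis
    proof (cases "A = 0")
      case True
      then show ?thesis using \<open>G \<ge> 0\<close> s b by (simp add: A_def G_def)
    next
      case False
      define l where "l = sqrt (\<epsilon> * A + 4 * a\<^sup>2 * B\<^sup>2)"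
      have "A > 0" using False \<open>A \<ge> 0\<close> by simp
      have l: "l \<in> lux_set \<Phi> M f"
        unfolding l_def A_def B_def
        by (rule lux_set_member[OF fin _ _ a(2) a(1) eps])
          (use adm \<open>A > 0\<close> in \<open>auto simp: admissible_def A_def\<close>)
      have "(lux_norm \<Phi> M f)\<^sup>2 \<le> l\<^sup>2"
        by (rule power_mono[OF lux_norm_bounds(2)[OF l] lux_norm_bounds(1)[OF l]])
      also have "l\<^sup>2 = \<epsilon> * A + 4 * a\<^sup>2 * B\<^sup>2"
        unfolding l_def using eps \<open>A \<ge> 0\<close> by simp
      finally have lux: "(lux_norm \<Phi> M f)\<^sup>2 \<le> \<epsilon> * A + 4 * a\<^sup>2 * B\<^sup>2" .
      have "A \<le> s * G + b * (lux_norm \<Phi> M f)\<^sup>2"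
        using SP adm l unfolding A_def G_def by blast
      also have "\<dots> \<le> s * G + b * (\<epsilon> * A + 4 * a\<^sup>2 * B\<^sup>2)"
        using lux b by (simp add: mult_left_mono)
      also have "\<dots> \<le> s * G + A / 2 + 4 * b * a\<^sup>2 * B\<^sup>2"
        using mult_right_mono[OF b_eps \<open>A \<ge> 0\<close>] by (simp add: algebra_simps)
      finally show ?thesis unfolding A_def B_def G_def by simp
    qed
  qed
  then show ?thesis using a(1) b by (intro exI[of _ "8 * b * a\<^sup>2"]) auto
qed

theorem theorem3p3:
  fixes V :: "real^'n \<Rightarrow> real" and \<Phi> \<Phi>s :: "real \<Rightarrow> real"
    and r0 :: real and \<beta> :: "real \<Rightarrow> real"
  assumes V_smooth: "smooth_fun V"
    and V_int: "integrable lborel (\<lambda>x. exp (- V x))"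
    and Y1: "young \<Phi>" and Y2: "young \<Phi>s" and leg: "legendre_of \<Phi> \<Phi>s"
    and growth: "filterlim (\<lambda>x. \<Phi>s x / x\<^sup>2) at_top at_top"
    and Y3: "young (\<lambda>x. \<Phi>s (sqrt \<bar>x\<bar>))"
    and r0: "0 \<le> r0"
    and beta_nonneg: "\<forall>r>r0. 0 \<le> \<beta> r"
    and SP: "\<forall>r>r0. \<forall>f. admissible (gibbs V) f \<and> lux_set \<Phi> (gibbs V) f \<noteq> {} \<longrightarrow>
       (\<integral>x. (f x)\<^sup>2 \<partial>gibbs V)
         \<le> r * (\<integral>x. (norm (grad f x))\<^sup>2 \<partial>gibbs V) + \<beta> r * (lux_norm \<Phi> (gibbs V) f)\<^sup>2"
  shows "\<exists>\<beta>'. (\<forall>r>8 * r0. 0 \<le> \<beta>' r) \<and>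
     (\<forall>r>8 * r0. \<forall>f. admissible (gibbs V) f \<longrightarrow>
       (\<integral>x. (f x)\<^sup>2 \<partial>gibbs V)
         \<le> r * (\<integral>x. (norm (grad f x))\<^sup>2 \<partial>gibbs V) + \<beta>' r * (\<integral>x. \<bar>f x\<bar> \<partial>gibbs V)\<^sup>2)"
proof -
  let ?M = "gibbs V"
  let ?L1_SP = "\<lambda>r c. 0 \<le> c \<and> (\<forall>f. admissible ?M f \<longrightarrow> (\<integral>x. (f x)\<^sup>2 \<partial>?M)
       \<le> r * (\<integral>x. (norm (grad f x))\<^sup>2 \<partial>?M) + c * (\<integral>x. \<bar>f x\<bar> \<partial>?M)\<^sup>2)"
  have scale: "\<exists>c. ?L1_SP r c" if r: "r > 8 * r0" for r
  proof -
    have s: "r / 2 > r0" "r / 2 \<ge> 0" using r r0 by linarith+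
    have "\<exists>c\<ge>0. \<forall>f. admissible ?M f \<longrightarrow> (\<integral>x. (f x)\<^sup>2 \<partial>?M)
       \<le> 2 * (r / 2) * (\<integral>x. (norm (grad f x))\<^sup>2 \<partial>?M) + c * (\<integral>x. \<bar>f x\<bar> \<partial>?M)\<^sup>2"
    proof (rule super_poincare_L1_at_scale[OF gibbs_finite[OF V_int] s(2)])
      show "0 \<le> \<beta> (r / 2)" using beta_nonneg s(1) by blast
      show "\<exists>a\<ge>0. \<forall>x. \<Phi> x \<le> a * \<bar>x\<bar> + \<eta> * x\<^sup>2" if "\<eta> > 0" for \<eta>
        by (rule young_small_quadratic_bound[OF Y1 Y2 leg growth that])
    qed (use SP s(1) in blast)
    then show ?thesis by simp
  qed
  show ?thesis
    using someI_ex[OF scale] by (intro exI[of _ "\<lambda>r. SOME c. ?L1_SP r c"]) auto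
qed

end
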